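(* Let $n\ge 1$. There is exactly one rooted binary tree (up to isomorphism) with $n$ leaves of minimal Sackin index if and only if there exists an integer $m\ge 0$ with $n\in\{2^m-1,\,2^m,\,2^m+1\}$.
   Context: A rooted binary tree is either a single vertex (both root and leaf), or a finite tree with a distinguished root of degree 2 whose other non-leaf vertices have degree 3; trees are considered up to isomorphism of rooted trees (leaves unlabeled). The Sackin index is $\mathcal S(T)=\sum_{x\text{ leaf}}\delta_x$, with $\delta_x$ the number of edges from the root to $x$. *)

theory Defs
  imports Main
begin

text \<open>Rooted binary trees as plane (ordered) trees; isomorphism of rooted trees
  (leaves unlabeled) is the equivalence allowing the two children of any
  inner vertex to be swapped.\<close>

datatype btree = Leaf | Node btree btree

fun leaves :: "btree \<Rightarrow> nat" where
  "leaves Leaf = 1"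
| "leaves (Node l r) = leaves l + leaves r"

text \<open>Sackin index: sum over leaves of the depth. Each leaf of a subtree gains
  one edge when the subtree is hung below a new root.\<close>
fun sackin :: "btree \<Rightarrow> nat" where
  "sackin Leaf = 0"
| "sackin (Node l r) = sackin l + sackin r + leaves l + leaves r"

fun iso :: "btree \<Rightarrow> btree \<Rightarrow> bool" where
  "iso Leaf Leaf = True"
| "iso (Node a b) (Node c d) = ((iso a c \<and> iso b d) \<or> (iso a d \<and> iso b c))"
| "iso _ _ = False"

definition sackin_minimal :: "nat \<Rightarrow> btree \<Rightarrow> bool" where
  "sackin_minimal n T \<longleftrightarrow> leaves T = n \<and> (\<forall>T'. leaves T' = n \<longrightarrow> sackin T \<le> sackin T')"

end

theory Submission
  imports Defs "HOL-Library.Discrete_Functions"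
begin

text \<open>Write \<open>k = floor_log n\<close> and \<open>L n t = n (t + 2) - 2^(t+1)\<close>. Every tree with \<open>n\<close> leaves
  has Sackin index at least \<open>L n k\<close>: if the root splits \<open>n = a + b\<close> with \<open>k = j + 1\<close>, then
  \<open>L n k = L a j + L b j + a + b\<close>, and \<open>t \<mapsto> L a t\<close> is maximal, with value \<open>L a (floor_log a)\<close>,
  exactly when \<open>2^t \<le> a \<le> 2^(t+1)\<close>. Hence a tree is Sackin-minimal iff both subtrees are and
  both have between \<open>2^(k-1)\<close> and \<open>2^k\<close> leaves. For \<open>n \<in> {2^m - 1, 2^m, 2^m + 1}\<close> the only
  such split is into \<open>\<lfloor>n/2\<rfloor>\<close> and \<open>\<lceil>n/2\<rceil>\<close>, which are again of this form, so the minimal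
  tree is unique up to isomorphism by induction; for every other \<open>n\<close> the split
  \<open>\<lfloor>n/2\<rfloor> - 1, \<lceil>n/2\<rceil> + 1\<close> is admissible as well and yields a non-isomorphic minimal tree.\<close>

text \<open>For \<open>2^t \<le> n \<le> 2^(t+1)\<close> this is the Sackin index of an \<open>n\<close>-leaf tree all of whose
  leaves have depth \<open>t\<close> or \<open>t + 1\<close>.\<close>
definition level_sackin :: "nat \<Rightarrow> nat \<Rightarrow> int" where
  "level_sackin n t = int n * (int t + 2) - 2 ^ (t + 1)"

definition min_sackin :: "nat \<Rightarrow> int" where
  "min_sackin n = level_sackin n (floor_log n)"

lemma level_sackin_Suc: "level_sackin n (Suc t) = level_sackin n t + int n - 2 ^ (t + 1)"
  by (simp add: level_sackin_def algebra_simps)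

lemma level_sackin_mono: "t \<le> s \<Longrightarrow> 2 ^ s \<le> n \<Longrightarrow> level_sackin n t \<le> level_sackin n s"
proof (induction s rule: dec_induct)
  case (step s)
  have "(2::nat) ^ s \<le> 2 ^ Suc s" by simp
  then have "2 ^ s \<le> n" using step.prems by linarith
  moreover have "(2::int) ^ (s + 1) \<le> int n"
  proof -
    have "2 ^ (s + 1) \<le> n" using step.prems by simp
    then show ?thesis by (metis of_nat_le_iff of_nat_numeral of_nat_power)
  qed
  ultimately show ?case using step.IH by (simp add: level_sackin_Suc)
qed simp

lemma level_sackin_strict_antimono:
  "n < 2 ^ (s + 1) \<Longrightarrow> s < t \<Longrightarrow> level_sackin n t < level_sackin n s"
proof (induction t)
  case (Suc t)
  have "(2::nat) ^ (s + 1) \<le> 2 ^ (t + 1)" using Suc.prems(2) by simp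
  then have "n < 2 ^ (t + 1)" using Suc.prems(1) by linarith
  then have "int n < 2 ^ (t + 1)" by (metis of_nat_less_iff of_nat_numeral of_nat_power)
  then have "level_sackin n (Suc t) < level_sackin n t" by (simp add: level_sackin_Suc)
  then show ?case using Suc by (cases "s = t") auto
qed simp

lemma floor_log_bounds: "n \<ge> 1 \<Longrightarrow> 2 ^ floor_log n \<le> n \<and> n < 2 ^ (floor_log n + 1)"
  using floor_log_exp2_le[of n] floor_log_exp2_gt[of n] by simp

lemma level_sackin_le_min_sackin:
  assumes "n \<ge> 1"
  shows "level_sackin n t \<le> min_sackin n"
proof (cases "t \<le> floor_log n")
  case True
  then show ?thesis using level_sackin_mono floor_log_bounds[OF assms] by (simp add: min_sackin_def)
next
  case False
  then show ?thesis
    using level_sackin_strict_antimono[of n "floor_log n" t] floor_log_bounds[OF assms]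
    by (simp add: min_sackin_def)
qed

lemma level_sackin_eq_min_sackin_iff:
  assumes "n \<ge> 1"
  shows "level_sackin n t = min_sackin n \<longleftrightarrow> 2 ^ t \<le> n \<and> n \<le> 2 ^ (t + 1)"
proof
  define k where "k = floor_log n"
  have k: "2 ^ k \<le> n" "n < 2 ^ (k + 1)" using floor_log_bounds[OF assms] by (simp_all add: k_def)
  assume eq: "level_sackin n t = min_sackin n"
  show "2 ^ t \<le> n \<and> n \<le> 2 ^ (t + 1)"
  proof (intro conjI; rule ccontr)
    assume "\<not> 2 ^ t \<le> n"
    then have "(2::nat) ^ k < 2 ^ t" using k(1) by linarith
    then have "k < t" by simp
    then show False using level_sackin_strict_antimono[OF k(2) \<open>k < t\<close>] eq by (simp add: min_sackin_def k_def)
  next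
    assume "\<not> n \<le> 2 ^ (t + 1)"
    then have "2 ^ (t + 1) < n" by simp
    then have "2 ^ (t + 1) < int n" by (metis of_nat_less_iff of_nat_numeral of_nat_power)
    then have "level_sackin n t < level_sackin n (Suc t)" by (simp add: level_sackin_Suc)
    also have "\<dots> \<le> min_sackin n" using level_sackin_le_min_sackin[OF assms] .
    finally show False using eq by simp
  qed
next
  assume t: "2 ^ t \<le> n \<and> n \<le> 2 ^ (t + 1)"
  show "level_sackin n t = min_sackin n"
  proof (cases "n = 2 ^ (t + 1)")
    case True
    then show ?thesis by (simp add: min_sackin_def level_sackin_Suc del: power_Suc)
  next
    case False
    then have "floor_log n = t" using t assms by (intro floor_log_eqI) auto
    then show ?thesis by (simp add: min_sackin_def)
  qed
qed

lemma leaves_ge_1: "leaves T \<ge> 1"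
  by (induction T) auto

lemma leaves_eq_1_iff: "leaves T = 1 \<longleftrightarrow> T = Leaf"
proof (cases T)
  case (Node l r)
  then show ?thesis using leaves_ge_1[of l] leaves_ge_1[of r] by simp
qed simp

lemma iso_leaves: "iso T T' \<Longrightarrow> leaves T = leaves T'"
  by (induction T T' rule: iso.induct) auto

lemma min_sackin_add:
  "floor_log (a + b) = Suc j \<Longrightarrow>
    min_sackin (a + b) = level_sackin a j + level_sackin b j + int a + int b"
  by (simp add: min_sackin_def level_sackin_def algebra_simps)

lemma min_sackin_le_sackin: "min_sackin (leaves T) \<le> int (sackin T)"
proof (induction T)
  case Leaf
  then show ?case by (simp add: min_sackin_def level_sackin_def)
next
  case (Node l r)
  define a b where "a = leaves l" and "b = leaves r"
  have ab: "a \<ge> 1" "b \<ge> 1" using leaves_ge_1 by (simp_all add: a_def b_def)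
  have "a + b \<ge> 2" using ab by simp
  then obtain j where j: "floor_log (a + b) = Suc j" using floor_log_rec by blast
  have "min_sackin (a + b) = level_sackin a j + level_sackin b j + int a + int b"
    using min_sackin_add[OF j] .
  also have "\<dots> \<le> min_sackin a + min_sackin b + int a + int b"
    using level_sackin_le_min_sackin ab by (simp add: add_mono)
  also have "\<dots> \<le> int (sackin (Node l r))" using Node by (simp add: a_def b_def)
  finally show ?case by (simp add: a_def b_def)
qed

text \<open>The admissible root splits of a Sackin-minimal tree with \<open>n \<ge> 2\<close> leaves; for \<open>n = 1\<close>
  the truncated subtraction in \<open>floor_log n - 1\<close> makes the condition meaningless.\<close>
definition balanced_split :: "nat \<Rightarrow> nat \<Rightarrow> nat \<Rightarrow> bool" where
  "balanced_split n a b \<longleftrightarrow> a + b = n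
     \<and> 2 ^ (floor_log n - 1) \<le> a \<and> a \<le> 2 ^ floor_log n
     \<and> 2 ^ (floor_log n - 1) \<le> b \<and> b \<le> 2 ^ floor_log n"

lemma balanced_split_ge_1: "balanced_split n a b \<Longrightarrow> a \<ge> 1 \<and> b \<ge> 1"
  unfolding balanced_split_def using one_le_power[of "2::nat" "floor_log n - 1"] by linarith

lemma balanced_split_iff_level_sackin:
  assumes "a \<ge> 1" "b \<ge> 1" "floor_log (a + b) = Suc j"
  shows "balanced_split (a + b) a b \<longleftrightarrow>
    level_sackin a j = min_sackin a \<and> level_sackin b j = min_sackin b"
  using assms by (simp add: balanced_split_def level_sackin_eq_min_sackin_iff)

lemma balanced_split_half:
  assumes "n \<ge> 2"
  shows "balanced_split n (n div 2) (n - n div 2)"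
proof -
  obtain j where j: "floor_log n = Suc j" using floor_log_rec[OF assms] by blast
  define P where "P = (2::nat) ^ j"
  have "2 * P \<le> n" "n < 4 * P" using floor_log_bounds[of n] assms j by (simp_all add: P_def)
  moreover have "2 * (n div 2) \<le> n" "n \<le> 2 * (n div 2) + 1" by linarith+
  ultimately have "P \<le> n div 2 \<and> n div 2 \<le> 2 * P \<and> P \<le> n - n div 2 \<and> n - n div 2 \<le> 2 * P"
    by linarith
  then show ?thesis unfolding balanced_split_def j by (simp add: P_def)
qed

lemma exists_sackin_eq_min_sackin: "n \<ge> 1 \<Longrightarrow> \<exists>T. leaves T = n \<and> int (sackin T) = min_sackin n"
proof (induction n rule: less_induct)
  case (less n)
  show ?case
  proof (cases "n = 1")
    case True
    then show ?thesis by (intro exI[of _ Leaf]) (simp add: min_sackin_def level_sackin_def)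
  next
    case False
    define a b where "a = n div 2" and "b = n - n div 2"
    have n: "n \<ge> 2" "a + b = n" using less.prems False by (simp_all add: a_def b_def)
    have split: "balanced_split n a b" using balanced_split_half[OF n(1)] by (simp add: a_def b_def)
    have ab: "a \<ge> 1" "b \<ge> 1" using balanced_split_ge_1[OF split] by simp_all
    obtain j where j: "floor_log (a + b) = Suc j" using floor_log_rec[OF n(1)] unfolding n(2) by blast
    obtain L where L: "leaves L = a" "int (sackin L) = min_sackin a" using less.IH[of a] ab n by auto
    obtain R where R: "leaves R = b" "int (sackin R) = min_sackin b" using less.IH[of b] ab n by auto
    have "min_sackin n = level_sackin a j + level_sackin b j + int a + int b"
      using min_sackin_add[OF j] n(2) by simp
    also have "\<dots> = min_sackin a + min_sackin b + int a + int b"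
      using balanced_split_iff_level_sackin[OF ab j] split n(2) by simp
    finally show ?thesis using L R n(2) by (intro exI[of _ "Node L R"]) simp
  qed
qed

lemma sackin_minimal_iff:
  assumes "n \<ge> 1"
  shows "sackin_minimal n T \<longleftrightarrow> leaves T = n \<and> int (sackin T) = min_sackin n"
proof -
  obtain T0 where T0: "leaves T0 = n" "int (sackin T0) = min_sackin n"
    using exists_sackin_eq_min_sackin[OF assms] by blast
  show ?thesis
  proof
    assume min: "sackin_minimal n T"
    then have "leaves T = n" "int (sackin T) \<le> int (sackin T0)"
      using T0(1) by (auto simp: sackin_minimal_def)
    moreover have "min_sackin n \<le> int (sackin T)" using min_sackin_le_sackin[of T] calculation by simp
    ultimately show "leaves T = n \<and> int (sackin T) = min_sackin n" using T0(2) by linarith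
  next
    assume T: "leaves T = n \<and> int (sackin T) = min_sackin n"
    have "sackin T \<le> sackin T'" if "leaves T' = n" for T'
    proof -
      have "min_sackin n \<le> int (sackin T')" using min_sackin_le_sackin[of T'] that by simp
      then show ?thesis using T by linarith
    qed
    then show "sackin_minimal n T" using T by (simp add: sackin_minimal_def)
  qed
qed

lemma sackin_minimal_exists: "n \<ge> 1 \<Longrightarrow> \<exists>T. sackin_minimal n T"
  using exists_sackin_eq_min_sackin sackin_minimal_iff by blast

lemma sackin_minimal_Node_iff:
  "sackin_minimal n (Node l r) \<longleftrightarrow>
    sackin_minimal (leaves l) l \<and> sackin_minimal (leaves r) r \<and> balanced_split n (leaves l) (leaves r)"
proof (cases "n = leaves l + leaves r")
  case True
  define a b where "a = leaves l" and "b = leaves r"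
  have ab: "a \<ge> 1" "b \<ge> 1" using leaves_ge_1 by (simp_all add: a_def b_def)
  have "a + b \<ge> 2" using ab by simp
  then obtain j where j: "floor_log (a + b) = Suc j" using floor_log_rec by blast
  have la: "level_sackin a j \<le> min_sackin a" and lb: "level_sackin b j \<le> min_sackin b"
    using level_sackin_le_min_sackin ab by auto
  have sl: "min_sackin a \<le> int (sackin l)" and sr: "min_sackin b \<le> int (sackin r)"
    using min_sackin_le_sackin by (simp_all add: a_def b_def)
  have sackin_Node: "int (sackin (Node l r)) = int (sackin l) + int (sackin r) + int a + int b"
    by (simp add: a_def b_def)
  have "int (sackin (Node l r)) = min_sackin (a + b) \<longleftrightarrow>
      int (sackin l) = min_sackin a \<and> int (sackin r) = min_sackin b
      \<and> level_sackin a j = min_sackin a \<and> level_sackin b j = min_sackin b"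
    using min_sackin_add[OF j] sackin_Node la lb sl sr by (intro iffI conjI; (elim conjE)?; linarith)
  then show ?thesis
    using True sackin_minimal_iff[of n "Node l r"] sackin_minimal_iff[OF ab(1), of l]
      sackin_minimal_iff[OF ab(2), of r] balanced_split_iff_level_sackin[OF ab j] ab
    by (simp add: a_def b_def)
next
  case False
  then show ?thesis by (simp add: sackin_minimal_def balanced_split_def)
qed

definition near_power_of_two :: "nat \<Rightarrow> bool" where
  "near_power_of_two n \<longleftrightarrow> (\<exists>m. n = 2 ^ m - 1 \<or> n = 2 ^ m \<or> n = 2 ^ m + 1)"

lemma near_power_of_two_le_2: "n \<le> 2 \<Longrightarrow> near_power_of_two n"
  unfolding near_power_of_two_def by (cases "n = 2") (auto intro: exI[of _ 0] exI[of _ 1])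

lemma near_power_of_two_halves:
  assumes "near_power_of_two n"
  shows "near_power_of_two (n div 2) \<and> near_power_of_two (n - n div 2)"
proof -
  obtain m where m: "n = 2 ^ m - 1 \<or> n = 2 ^ m \<or> n = 2 ^ m + 1"
    using assms unfolding near_power_of_two_def by blast
  show ?thesis
  proof (cases m)
    case 0
    then have "n div 2 \<le> 2" "n - n div 2 \<le> 2" using m by auto
    then show ?thesis using near_power_of_two_le_2 by blast
  next
    case (Suc k)
    define P where "P = (2::nat) ^ k"
    have "P \<ge> 1" by (simp add: P_def)
    moreover have "n = 2 * P - 1 \<or> n = 2 * P \<or> n = 2 * P + 1" using m by (simp add: Suc P_def)
    moreover have "2 * (n div 2) \<le> n" "n \<le> 2 * (n div 2) + 1" by linarith+
    ultimately have "(n div 2 = P - 1 \<or> n div 2 = P) \<and> (n - n div 2 = P \<or> n - n div 2 = P + 1)"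
      by (elim disjE) linarith+
    then show ?thesis unfolding near_power_of_two_def P_def by (intro conjI exI[of _ k]) auto
  qed
qed

lemma near_power_of_two_far_from_middle:
  assumes "near_power_of_two n"
  shows "n \<le> 2 * 2 ^ j + 1 \<or> 4 * 2 ^ j \<le> n + 1"
proof -
  obtain m where m: "n = 2 ^ m - 1 \<or> n = 2 ^ m \<or> n = 2 ^ m + 1"
    using assms unfolding near_power_of_two_def by blast
  show ?thesis
  proof (cases "m \<le> Suc j")
    case True
    then have "(2::nat) ^ m \<le> 2 * 2 ^ j" using power_increasing[of m "Suc j" "2::nat"] by simp
    then show ?thesis using m by linarith
  next
    case False
    then have "(4::nat) * 2 ^ j \<le> 2 ^ m" using power_increasing[of "Suc (Suc j)" m "2::nat"] by simp
    then show ?thesis using m by linarith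
  qed
qed

lemma balanced_split_near_power_of_two:
  assumes "near_power_of_two n" "n \<ge> 2" "balanced_split n a b"
  shows "{a, b} = {n div 2, n - n div 2}"
proof -
  obtain j where j: "floor_log n = Suc j" using floor_log_rec[OF assms(2)] by blast
  define P where "P = (2::nat) ^ j"
  have "a + b = n" "P \<le> a" "a \<le> 2 * P" "P \<le> b" "b \<le> 2 * P"
    using assms(3) unfolding balanced_split_def j by (simp_all add: P_def)
  moreover have "2 * (n div 2) \<le> n" "n \<le> 2 * (n div 2) + 1" by linarith+
  moreover have "n \<le> 2 * P + 1 \<or> 4 * P \<le> n + 1"
    using near_power_of_two_far_from_middle[OF assms(1)] by (simp add: P_def)
  ultimately have "a = n div 2 \<or> b = n div 2" by (elim disjE) linarith+
  then show ?thesis using \<open>a + b = n\<close> by (elim disjE) (auto simp: insert_commute)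
qed

lemma balanced_split_not_near_power_of_two:
  assumes "\<not> near_power_of_two n"
  shows "balanced_split n (n div 2 - 1) (n - n div 2 + 1)"
proof -
  have n: "n \<ge> 2"
  proof (rule ccontr)
    assume "\<not> n \<ge> 2"
    then show False using assms near_power_of_two_le_2[of n] by simp
  qed
  obtain j where j: "floor_log n = Suc j" using floor_log_rec[OF n] by blast
  define P where "P = (2::nat) ^ j"
  have bounds: "2 * P \<le> n" "n < 4 * P" using floor_log_bounds[of n] n j by (simp_all add: P_def)
  have "near_power_of_two (2 * P)" "near_power_of_two (2 * P + 1)"
    unfolding near_power_of_two_def by (rule exI[of _ "Suc j"], simp add: P_def)+
  moreover have "near_power_of_two (4 * P - 1)"
    unfolding near_power_of_two_def by (rule exI[of _ "Suc (Suc j)"], simp add: P_def)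
  ultimately have "n \<noteq> 2 * P" "n \<noteq> 2 * P + 1" "n \<noteq> 4 * P - 1" using assms by auto
  moreover have "2 * (n div 2) \<le> n" "n \<le> 2 * (n div 2) + 1" by linarith+
  ultimately have "P \<le> n div 2 - 1 \<and> n div 2 - 1 \<le> 2 * P \<and> P \<le> n - n div 2 + 1
      \<and> n - n div 2 + 1 \<le> 2 * P \<and> n div 2 - 1 + (n - n div 2 + 1) = n"
    using bounds by linarith
  then show ?thesis unfolding balanced_split_def j by (simp add: P_def)
qed

lemma iso_Node_leaves: "iso (Node l r) (Node l' r') \<Longrightarrow> leaves l = leaves l' \<or> leaves l = leaves r'"
  using iso_leaves by auto

lemma sackin_minimal_unique:
  "near_power_of_two n \<Longrightarrow> sackin_minimal n T \<Longrightarrow> sackin_minimal n T' \<Longrightarrow> iso T T'"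
proof (induction T arbitrary: n T')
  case Leaf
  then have "T' = Leaf" using leaves_eq_1_iff by (simp add: sackin_minimal_def)
  then show ?case by simp
next
  case (Node l r)
  have n: "n = leaves l + leaves r" "n \<ge> 2"
    using Node.prems(2) leaves_ge_1[of l] leaves_ge_1[of r] by (simp_all add: sackin_minimal_def)
  obtain l' r' where T': "T' = Node l' r'"
    using Node.prems(3) n leaves_eq_1_iff[of T'] by (cases T') (simp_all add: sackin_minimal_def)
  have min: "sackin_minimal (leaves l) l" "sackin_minimal (leaves r) r"
      "balanced_split n (leaves l) (leaves r)"
    using Node.prems(2) sackin_minimal_Node_iff by blast+
  have min': "sackin_minimal (leaves l') l'" "sackin_minimal (leaves r') r'"
      "balanced_split n (leaves l') (leaves r')"
    using Node.prems(3) sackin_minimal_Node_iff unfolding T' by blast+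
  have halves: "{leaves l, leaves r} = {n div 2, n - n div 2}"
      "{leaves l', leaves r'} = {n div 2, n - n div 2}"
    using balanced_split_near_power_of_two[OF Node.prems(1) n(2)] min(3) min'(3) by blast+
  have near: "near_power_of_two (leaves l)" "near_power_of_two (leaves r)"
    using near_power_of_two_halves[OF Node.prems(1)] halves(1) by (auto simp: doubleton_eq_iff)
  from halves consider "leaves l = leaves l'" "leaves r = leaves r'"
    | "leaves l = leaves r'" "leaves r = leaves l'"
    by (auto simp: doubleton_eq_iff)
  then show ?case
  proof cases
    case 1
    then have "iso l l'" "iso r r'"
      using Node.IH(1)[OF near(1) min(1)] Node.IH(2)[OF near(2) min(2)] min'(1,2) by simp_all
    then show ?thesis unfolding T' by simp
  next
    case 2
    then have "iso l r'" "iso r l'"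
      using Node.IH(1)[OF near(1) min(1)] Node.IH(2)[OF near(2) min(2)] min'(1,2) by simp_all
    then show ?thesis unfolding T' by simp
  qed
qed

lemma sackin_minimal_Node_exists:
  assumes "balanced_split n a b"
  shows "\<exists>l r. sackin_minimal n (Node l r) \<and> leaves l = a \<and> leaves r = b"
proof -
  have "a \<ge> 1" "b \<ge> 1" using balanced_split_ge_1[OF assms] by simp_all
  then obtain l r where lr: "sackin_minimal a l" "sackin_minimal b r"
    using sackin_minimal_exists by meson
  then have "leaves l = a" "leaves r = b" by (simp_all add: sackin_minimal_def)
  then show ?thesis using assms lr sackin_minimal_Node_iff[of n l r] by auto
qed

lemma sackin_minimal_not_unique:
  assumes "\<not> near_power_of_two n" "sackin_minimal n T"
  shows "\<exists>T'. sackin_minimal n T' \<and> \<not> iso T T'"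
proof (rule ccontr)
  assume "\<not> ?thesis"
  then have uniq: "iso T T'" if "sackin_minimal n T'" for T' using that by blast
  define a where "a = n div 2"
  have split: "balanced_split n (a - 1) (n - a + 1)"
    using balanced_split_not_near_power_of_two[OF assms(1)] by (simp add: a_def)
  have "a \<ge> 2" using balanced_split_ge_1[OF split] by simp
  then have "n \<ge> 2" "a - 1 < a" "a \<le> n - a" by (simp_all add: a_def)
  obtain l1 r1 where T1: "sackin_minimal n (Node l1 r1)" "leaves l1 = a" "leaves r1 = n - a"
    using sackin_minimal_Node_exists balanced_split_half[OF \<open>n \<ge> 2\<close>] unfolding a_def by blast
  obtain l2 r2 where T2: "sackin_minimal n (Node l2 r2)" "leaves l2 = a - 1" "leaves r2 = n - a + 1"
    using sackin_minimal_Node_exists[OF split] by blast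
  obtain l r where T: "T = Node l r"
    using assms(2) \<open>n \<ge> 2\<close> leaves_eq_1_iff[of T] by (cases T) (simp_all add: sackin_minimal_def)
  have "leaves l = a \<or> leaves l = n - a" "leaves l = a - 1 \<or> leaves l = n - a + 1"
    using iso_Node_leaves uniq[OF T1(1)] uniq[OF T2(1)] T1 T2 unfolding T by metis+
  then show False using \<open>a - 1 < a\<close> \<open>a \<le> n - a\<close> by linarith
qed

theorem mainTheorem14:
  fixes n :: nat
  assumes "n \<ge> 1"
  shows "(\<exists>T. sackin_minimal n T \<and> (\<forall>T'. sackin_minimal n T' \<longrightarrow> iso T T'))
     \<longleftrightarrow> (\<exists>m::nat. n = 2^m - 1 \<or> n = 2^m \<or> n = 2^m + 1)"
  unfolding near_power_of_two_def[symmetric]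
proof
  assume "\<exists>T. sackin_minimal n T \<and> (\<forall>T'. sackin_minimal n T' \<longrightarrow> iso T T')"
  then obtain T where T: "sackin_minimal n T" and uniq: "\<forall>T'. sackin_minimal n T' \<longrightarrow> iso T T'"
    by blast
  show "near_power_of_two n"
    using sackin_minimal_not_unique[OF _ T] uniq by blast
next
  assume "near_power_of_two n"
  moreover obtain T where "sackin_minimal n T" using sackin_minimal_exists[OF assms] by blast
  ultimately show "\<exists>T. sackin_minimal n T \<and> (\<forall>T'. sackin_minimal n T' \<longrightarrow> iso T T')"
    using sackin_minimal_unique by blast
qed

end
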